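(* Fix an automaton $i$, a start time $t$, a length $h$ and a canonical transition set $\mathcal C_{i,t,h}$. For any strings $r,r'\in\{0,1\}^h$ with $\tilde S_{i,t,h}(r)=\tilde S_{i,t,h}(r')$ and any state $s_1\in A$, we have $F^h(i,r,s_1,t)=F^h(i,r',s_1,t)$.
   Context: $A$ is the finite state space of a family of automata; $F^h(i,r,s,t)\in A$ is the state that automaton $i$, starting in state $s$ at time $t$, reaches after reading the bits of $r\in\{0,1\}^h$ at times $t,\dots,t+h-1$. For fixed $i,t,h$, $(s_1,s_2)\sim(s_1',s_2')$ means: for all $r\in\{0,1\}^h$, $F^h(i,r,s_1,t)=s_2\iff F^h(i,r,s_1',t)=s_2'$. A canonical transition set is a set $\mathcal C_{i,t,h}\subseteq A\times A$ such that every pair in $A\times A$ is $\sim$-equivalent to some pair of $\mathcal C_{i,t,h}$. The canonical stepping table is $\tilde S_{i,t,h}(r)=\{(s_1,s_2)\in\mathcal C_{i,t,h}:F^h(i,r,s_1,t)=s_2\}$. *)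

theory Defs
  imports Main
begin

text \<open>The finite state space A is the type 'a (class finite).
  F h i r s t is the state F^h(i,r,s,t): automaton i, starting in state s at time t,
  after reading the bits of r (a bool list of length h) at times t..t+h-1.\<close>

definition trans_equiv ::
  "(nat \<Rightarrow> 'i \<Rightarrow> bool list \<Rightarrow> 'a \<Rightarrow> nat \<Rightarrow> 'a) \<Rightarrow> 'i \<Rightarrow> nat \<Rightarrow> nat
     \<Rightarrow> 'a \<times> 'a \<Rightarrow> 'a \<times> 'a \<Rightarrow> bool" where
  "trans_equiv F i t h p q \<longleftrightarrow>
     (\<forall>r. length r = h \<longrightarrow>
        (F h i r (fst p) t = snd p \<longleftrightarrow> F h i r (fst q) t = snd q))"

definition canonical_transition_set ::
  "(nat \<Rightarrow> 'i \<Rightarrow> bool list \<Rightarrow> 'a::finite \<Rightarrow> nat \<Rightarrow> 'a) \<Rightarrow> 'i \<Rightarrow> nat \<Rightarrow> nat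
     \<Rightarrow> ('a \<times> 'a) set \<Rightarrow> bool" where
  "canonical_transition_set F i t h C \<longleftrightarrow>
     (\<forall>p \<in> (UNIV :: ('a \<times> 'a) set). \<exists>q \<in> C. trans_equiv F i t h p q)"

definition canonical_stepping_table ::
  "(nat \<Rightarrow> 'i \<Rightarrow> bool list \<Rightarrow> 'a \<Rightarrow> nat \<Rightarrow> 'a) \<Rightarrow> 'i \<Rightarrow> nat \<Rightarrow> nat
     \<Rightarrow> ('a \<times> 'a) set \<Rightarrow> bool list \<Rightarrow> ('a \<times> 'a) set" where
  "canonical_stepping_table F i t h C r = {(s1, s2) \<in> C. F h i r s1 t = s2}"

end

theory Submission
  imports Defs
begin

text \<open>Every pair (s1, s2) is equivalent to a canonical one, so equal tables
  force r and r' to agree on whether they drive s1 to s2; taking s2 to be the state that r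
  reaches from s1 gives the claim.\<close>

lemma trans_equiv_in_stepping_table_iff:
  assumes "q \<in> C" and "trans_equiv F i t h p q" and "length r = h"
  shows "q \<in> canonical_stepping_table F i t h C r \<longleftrightarrow> F h i r (fst p) t = snd p"
  using assms unfolding trans_equiv_def canonical_stepping_table_def by (cases q) auto

lemma stepping_table_eq_imp_same_transitions:
  assumes "canonical_transition_set F i t h C"
    and "length r = h" and "length r' = h"
    and "canonical_stepping_table F i t h C r = canonical_stepping_table F i t h C r'"
  shows "F h i r s1 t = s2 \<longleftrightarrow> F h i r' s1 t = s2"
proof -
  obtain q where q: "q \<in> C" "trans_equiv F i t h (s1, s2) q"
    using assms(1) unfolding canonical_transition_set_def by blast
  show ?thesis
    using trans_equiv_in_stepping_table_iff[OF q, of r] trans_equiv_in_stepping_table_iff[OF q, of r']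
      assms(2-4) by simp
qed

theorem proposition6p7:
  fixes F :: "nat \<Rightarrow> 'i \<Rightarrow> bool list \<Rightarrow> 'a::finite \<Rightarrow> nat \<Rightarrow> 'a"
    and i :: 'i and t h :: nat and C :: "('a \<times> 'a) set"
    and r r' :: "bool list" and s1 :: 'a
  assumes "canonical_transition_set F i t h C"
    and "length r = h" and "length r' = h"
    and "canonical_stepping_table F i t h C r = canonical_stepping_table F i t h C r'"
  shows "F h i r s1 t = F h i r' s1 t"
  using stepping_table_eq_imp_same_transitions[OF assms, of s1 "F h i r s1 t"] by simp

end
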